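(* Let $\sigma$ be a primitive substitution over a finite alphabet $\mathcal{A}$ and let $(X_\sigma,T)$ be the associated subshift. Let $v\in\mathcal{L}(X_\sigma)$ and suppose its frequency is rational, $\mu_v=p_v/q_v$ written in irreducible form. Suppose that $(X_\sigma,T)$ is balanced on $v$. Then: (1) For each $a\in\mathcal{A}$ and each return word $w$ to $a$, $q_v$ divides $|\sigma^n(w)|$ for all $n$ large enough. In particular, if $aa\in\mathcal{L}_2(X_\sigma)$, then $q_v$ divides $|\sigma^n(a)|$ for all $n$ large enough. (2) Let $a\in\mathcal{A}$ and suppose there exist $b,c\in\mathcal{A}$ such that $bac\in\mathcal{L}(X_\sigma)$ and $bc\in\mathcal{L}(X_\sigma)$. Then $q_v$ divides $|\sigma^n(a)|$ for all $n$ large enough.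
   Context: A substitution $\sigma$ on a finite alphabet $\mathcal{A}$ is a non-erasing morphism of the free monoid $\mathcal{A}^*$. Its substitution matrix $M_\sigma$ has entries $M_\sigma(a,b)=|\sigma(b)|_a$ (number of occurrences of $a$ in $\sigma(b)$); $\sigma$ is primitive if some power of $M_\sigma$ has all entries positive. $X_\sigma$ is the set of $x\in\mathcal{A}^{\mathbb Z}$ such that every finite factor of $x$ is a factor of $\sigma^n(a)$ for some $a\in\mathcal{A}$, $n\in\mathbb{N}$; $T$ is the shift. $(X_\sigma,T)$ is minimal and uniquely ergodic with invariant probability measure $\mu$. $\mathcal{L}(X_\sigma)$ is the set of finite factors of elements of $X_\sigma$, $\mathcal{L}_n(X_\sigma)$ those of length $n$. The frequency of $v$ is $\mu_v=\mu([v])$ where $[v]=\{x\in X_\sigma: x_0\cdots x_{|v|-1}=v\}$. For finite words, $|w|$ is the length and $|w|_v$ the number of occurrences of $v$ in $w$. $(X_\sigma,T)$ is balanced on $v$ if there is $C_v$ with $||w|_v-|w'|_v|\le C_v$ for all $w,w'\in\mathcal{L}(X_\sigma)$ with $|w|=|w'|$. A return word to the letter $a$ is a word $w$ such that $wa\in\mathcal{L}(X_\sigma)$ and $a$ is a prefix of $wa$. *)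

theory Defs
  imports "HOL-Probability.Probability" "HOL-Library.Sublist"
begin

definition non_erasing :: "('a \<Rightarrow> 'a list) \<Rightarrow> bool" where
  "non_erasing \<sigma> \<longleftrightarrow> (\<forall>a. \<sigma> a \<noteq> [])"

definition subst_word :: "('a \<Rightarrow> 'a list) \<Rightarrow> 'a list \<Rightarrow> 'a list" where
  "subst_word \<sigma> w = concat (map \<sigma> w)"

definition subst_pow :: "('a \<Rightarrow> 'a list) \<Rightarrow> nat \<Rightarrow> 'a list \<Rightarrow> 'a list" where
  "subst_pow \<sigma> n = (subst_word \<sigma> ^^ n)"

definition occ :: "'a list \<Rightarrow> 'a list \<Rightarrow> nat" where
  "occ w v = card {i. i + length v \<le> length w \<and> take (length v) (drop i w) = v}"

definition subst_matrix :: "('a \<Rightarrow> 'a list) \<Rightarrow> 'a \<Rightarrow> 'a \<Rightarrow> nat" where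
  "subst_matrix \<sigma> a b = count_list (\<sigma> b) a"

definition mat_mult :: "('a::finite \<Rightarrow> 'a \<Rightarrow> nat) \<Rightarrow> ('a \<Rightarrow> 'a \<Rightarrow> nat) \<Rightarrow> 'a \<Rightarrow> 'a \<Rightarrow> nat" where
  "mat_mult A B a c = (\<Sum>b\<in>UNIV. A a b * B b c)"

fun mat_pow :: "('a::finite \<Rightarrow> 'a \<Rightarrow> nat) \<Rightarrow> nat \<Rightarrow> 'a \<Rightarrow> 'a \<Rightarrow> nat" where
  "mat_pow A 0 = (\<lambda>a b. if a = b then 1 else 0)"
| "mat_pow A (Suc n) = mat_mult (mat_pow A n) A"

definition primitive :: "('a::finite \<Rightarrow> 'a list) \<Rightarrow> bool" where
  "primitive \<sigma> \<longleftrightarrow> (\<exists>k\<ge>1. \<forall>a b. mat_pow (subst_matrix \<sigma>) k a b > 0)"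

definition gen_lang :: "('a \<Rightarrow> 'a list) \<Rightarrow> 'a list set" where
  "gen_lang \<sigma> = {u. \<exists>a n. sublist u (subst_pow \<sigma> n [a])}"

definition window :: "(int \<Rightarrow> 'a) \<Rightarrow> int \<Rightarrow> nat \<Rightarrow> 'a list" where
  "window x i m = map (\<lambda>k. x (i + int k)) [0..<m]"

definition Xsub :: "('a \<Rightarrow> 'a list) \<Rightarrow> (int \<Rightarrow> 'a) set" where
  "Xsub \<sigma> = {x. \<forall>i m. window x i m \<in> gen_lang \<sigma>}"

definition lang :: "('a \<Rightarrow> 'a list) \<Rightarrow> 'a list set" where
  "lang \<sigma> = {u. \<exists>x\<in>Xsub \<sigma>. \<exists>i. u = window x i (length u)}"

definition shift :: "(int \<Rightarrow> 'a) \<Rightarrow> (int \<Rightarrow> 'a)" where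
  "shift x = (\<lambda>i. x (i + 1))"

definition cyl :: "('a \<Rightarrow> 'a list) \<Rightarrow> 'a list \<Rightarrow> (int \<Rightarrow> 'a) set" where
  "cyl \<sigma> v = {x \<in> Xsub \<sigma>. window x 0 (length v) = v}"

text \<open>mu is a shift-invariant Borel probability measure on A^Z (product sigma-algebra
  of discrete sigma-algebras) concentrated on X_sigma. For primitive sigma there is exactly
  one such measure.\<close>
definition invariant_prob :: "('a \<Rightarrow> 'a list) \<Rightarrow> (int \<Rightarrow> 'a) measure \<Rightarrow> bool" where
  "invariant_prob \<sigma> \<mu> \<longleftrightarrow>
     sets \<mu> = sets (PiM (UNIV::int set) (\<lambda>_. count_space (UNIV::'a set))) \<and>
     prob_space \<mu> \<and> emeasure \<mu> (Xsub \<sigma>) = 1 \<and>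
     (\<forall>A\<in>sets \<mu>. emeasure \<mu> (shift -` A) = emeasure \<mu> A)"

definition balanced_on :: "('a \<Rightarrow> 'a list) \<Rightarrow> 'a list \<Rightarrow> bool" where
  "balanced_on \<sigma> v \<longleftrightarrow> (\<exists>C::int. \<forall>w\<in>lang \<sigma>. \<forall>w'\<in>lang \<sigma>.
      length w = length w' \<longrightarrow> \<bar>int (occ w v) - int (occ w' v)\<bar> \<le> C)"

definition return_word :: "('a \<Rightarrow> 'a list) \<Rightarrow> 'a \<Rightarrow> 'a list \<Rightarrow> bool" where
  "return_word \<sigma> a w \<longleftrightarrow> w @ [a] \<in> lang \<sigma> \<and> prefix [a] (w @ [a])"

end

theory Submission
  imports Defs
begin

(* Balance on v and the invariance of mu give |q |u|_v - p (|u| - |v| + 1)| <= K for every word u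
   of the language. Hence the discrepancy  q #{occurrences of v starting in [i, j)} - p (j - i)  of
   position intervals of words of the language is bounded, and its absolute value attains a maximum
   D on an interval [i0, j0) of some word z0.
   If z0 occurs at positions s1 < s2 of a word of the language, the interval [s1 + i0, s2 + j0) is
   made of two copies of the extremal interval and the gap [s1 + j0, s2 + i0). All three have
   discrepancy of absolute value at most D, so the gap cancels one copy: the discrepancy of
   [s1 + i0, s2 + i0) vanishes and q divides p (s2 - s1), hence s2 - s1.
   By primitivity z0 occurs in sigma^n(c) for every letter c once n is large. For b x c in the
   language, sigma^n(b x c) then contains two occurrences of z0 at distance |sigma^n(b x)| up to
   offsets depending only on b and c; return words (b = c = a) and the pair b a c, b c give the
   claims. *)

lemma subst_word_append [simp]: "subst_word \<sigma> (x @ y) = subst_word \<sigma> x @ subst_word \<sigma> y"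
  by (simp add: subst_word_def)

lemma subst_pow_0 [simp]: "subst_pow \<sigma> 0 w = w"
  by (simp add: subst_pow_def)

lemma subst_pow_Suc: "subst_pow \<sigma> (Suc n) w = subst_pow \<sigma> n (subst_word \<sigma> w)"
  by (simp add: subst_pow_def funpow_Suc_right del: funpow.simps)

lemma subst_pow_add: "subst_pow \<sigma> (m + n) w = subst_pow \<sigma> m (subst_pow \<sigma> n w)"
  by (simp add: subst_pow_def funpow_add)

lemma subst_pow_append [simp]:
  "subst_pow \<sigma> n (x @ y) = subst_pow \<sigma> n x @ subst_pow \<sigma> n y"
  by (induction n) (simp_all add: subst_pow_def)

lemma subst_pow_Nil [simp]: "subst_pow \<sigma> n [] = []"
  by (induction n) (simp_all add: subst_pow_def subst_word_def)

lemma subst_pow_Cons: "subst_pow \<sigma> n (c # w) = subst_pow \<sigma> n [c] @ subst_pow \<sigma> n w"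
  using subst_pow_append[of \<sigma> n "[c]" w] by simp

lemma subst_pow_eq_concat: "subst_pow \<sigma> n w = concat (map (\<lambda>c. subst_pow \<sigma> n [c]) w)"
proof (induction w)
  case (Cons c w)
  then show ?case using subst_pow_Cons[of \<sigma> n c w] by simp
qed simp

lemma sublist_subst_pow: "sublist x y \<Longrightarrow> sublist (subst_pow \<sigma> n x) (subst_pow \<sigma> n y)"
  unfolding sublist_def by (metis subst_pow_append)

lemma subst_pow_nonempty:
  assumes "non_erasing \<sigma>" "w \<noteq> []"
  shows "subst_pow \<sigma> n w \<noteq> []"
  using assms(2)
proof (induction n arbitrary: w)
  case (Suc n)
  then have "subst_word \<sigma> w \<noteq> []"
    using assms(1) by (cases w) (auto simp: subst_word_def non_erasing_def)
  then show ?case by (simp add: subst_pow_Suc Suc.IH)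
qed simp

lemma mem_subst_pow_if_mat_pow_pos:
  "mat_pow (subst_matrix \<sigma>) n a c > 0 \<Longrightarrow> a \<in> set (subst_pow \<sigma> n [c])"
proof (induction n arbitrary: c)
  case 0
  then show ?case by (simp split: if_splits)
next
  case (Suc n)
  have "(\<Sum>b\<in>UNIV. mat_pow (subst_matrix \<sigma>) n a b * subst_matrix \<sigma> b c) \<noteq> 0"
    using Suc.prems unfolding mat_pow.simps mat_mult_def by (rule gr_implies_not0)
  then obtain b where "mat_pow (subst_matrix \<sigma>) n a b * subst_matrix \<sigma> b c \<noteq> 0"
    by (rule sum.not_neutral_contains_not_neutral)
  then have "a \<in> set (subst_pow \<sigma> n [b])" and "b \<in> set (\<sigma> c)"
    using Suc.IH[of b] count_list_0_iff[of "\<sigma> c" b] unfolding subst_matrix_def[of \<sigma> b c]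
    by auto
  then show ?case
    by (auto simp: subst_pow_Suc subst_word_def subst_pow_eq_concat[of \<sigma> n "\<sigma> c"])
qed

lemma primitive_eventually_all_letters:
  assumes "non_erasing \<sigma>" "primitive \<sigma>"
  obtains k where "\<And>n a c. k \<le> n \<Longrightarrow> a \<in> set (subst_pow \<sigma> n [c])"
proof -
  obtain k where k: "\<And>a b. mat_pow (subst_matrix \<sigma>) k a b > 0"
    using assms(2) unfolding primitive_def by blast
  have "a \<in> set (subst_pow \<sigma> n [c])" if "k \<le> n" for n a c
  proof -
    obtain d where d: "d \<in> set (subst_pow \<sigma> (n - k) [c])"
      using subst_pow_nonempty[OF assms(1), of "[c]" "n - k"] by (meson list.set_sel(1) not_Cons_self2)
    have "subst_pow \<sigma> n [c] = concat (map (\<lambda>e. subst_pow \<sigma> k [e]) (subst_pow \<sigma> (n - k) [c]))"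
      using subst_pow_add[of \<sigma> k "n - k" "[c]"] that subst_pow_eq_concat by simp
    then show ?thesis
      using d mem_subst_pow_if_mat_pow_pos[OF k] by auto
  qed
  then show ?thesis using that by blast
qed

section \<open>The language of a primitive substitution\<close>

lemma prefix_concat_map_long:
  assumes "\<And>c. length (f c) \<le> L" "prefix u (concat (map f s))" "L < length u"
  shows "\<exists>c. prefix (f c) u"
proof (cases s)
  case Nil
  then show ?thesis using assms(2,3) by simp
next
  case (Cons c s')
  then have "prefix u (f c @ concat (map f s'))" using assms(2) by simp
  then have "prefix u (f c) \<or> prefix (f c) u"
    using prefix_same_cases[of u _ "f c"] by simp
  moreover have "\<not> prefix u (f c)"
    using assms(1)[of c] assms(3) prefix_length_le[of u "f c"] by linarith
  ultimately show ?thesis by blast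
qed

lemma sublist_concat_map_long:
  assumes "\<And>c. length (f c) \<le> L" "sublist u (concat (map f s))" "2 * L < length u"
  shows "\<exists>c. sublist (f c) u"
  using assms(2)
proof (induction s)
  case Nil
  then show ?case using assms(3) by simp
next
  case (Cons c s)
  then consider "sublist u (f c)" | "sublist u (concat (map f s))"
    | u1 u2 where "u = u1 @ u2" "suffix u1 (f c)" "prefix u2 (concat (map f s))"
    using sublist_append[of u "f c" "concat (map f s)"] by auto
  then show ?case
  proof cases
    case 1
    then show ?thesis using assms(1)[of c] assms(3) sublist_length_le[of u "f c"] by linarith
  next
    case 2
    then show ?thesis by (rule Cons.IH)
  next
    case 3
    then have "L < length u2"
      using assms(1)[of c] assms(3) suffix_length_le[of u1 "f c"] by simp
    then obtain d where "prefix (f d) u2"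
      using prefix_concat_map_long[OF assms(1) \<open>prefix u2 _\<close>] by blast
    then have "sublist (f d) u2" by (rule prefix_imp_sublist)
    then show ?thesis using \<open>u = u1 @ u2\<close> sublist_append_leftI sublist_order.order.trans by metis
  qed
qed

lemma sublist_gen_lang_eventually:
  assumes "non_erasing \<sigma>" "primitive \<sigma>" "u \<in> gen_lang \<sigma>"
  obtains n0 where "\<And>n c. n0 \<le> n \<Longrightarrow> sublist u (subst_pow \<sigma> n [c])"
proof -
  obtain k where k: "\<And>n a c. k \<le> n \<Longrightarrow> a \<in> set (subst_pow \<sigma> n [c])"
    using primitive_eventually_all_letters[OF assms(1,2)] by blast
  obtain b m where u: "sublist u (subst_pow \<sigma> m [b])"
    using assms(3) unfolding gen_lang_def by blast
  have "sublist u (subst_pow \<sigma> n [c])" if "m + k \<le> n" for n c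
  proof -
    have "b \<in> set (subst_pow \<sigma> (n - m) [c])"
      using that by (intro k) simp
    then obtain xs ys where "subst_pow \<sigma> (n - m) [c] = xs @ b # ys"
      by (meson split_list)
    then have "subst_pow \<sigma> n [c] = subst_pow \<sigma> m xs @ subst_pow \<sigma> m [b] @ subst_pow \<sigma> m ys"
      using subst_pow_add[of \<sigma> m "n - m" "[c]"] subst_pow_Cons[of \<sigma> m b ys] that by simp
    then have "sublist (subst_pow \<sigma> m [b]) (subst_pow \<sigma> n [c])"
      by simp
    then show ?thesis using u sublist_order.order.trans by blast
  qed
  then show ?thesis using that by blast
qed

lemma long_factor_contains_gen_lang:
  fixes \<sigma> :: "'a::finite \<Rightarrow> 'a list"
  assumes "non_erasing \<sigma>" "primitive \<sigma>" "u \<in> gen_lang \<sigma>"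
  obtains L where "\<And>w b N. sublist w (subst_pow \<sigma> N [b]) \<Longrightarrow> L \<le> length w \<Longrightarrow> sublist u w"
proof -
  obtain n0 where n0: "\<And>n c. n0 \<le> n \<Longrightarrow> sublist u (subst_pow \<sigma> n [c])"
    using sublist_gen_lang_eventually[OF assms] by blast
  define B where "B = Max ((\<lambda>(N, b). length (subst_pow \<sigma> N [b])) ` ({..n0} \<times> UNIV))"
  have B: "length (subst_pow \<sigma> N [b]) \<le> B" if "N \<le> n0" for N b
    unfolding B_def using that by (intro Max_ge) auto
  have "sublist u w" if w: "sublist w (subst_pow \<sigma> N [b])" "2 * B < length w" for w b N
  proof (cases "N \<le> n0")
    case True
    then show ?thesis using w B[of N b] sublist_length_le by fastforce
  next
    case False
    then have "subst_pow \<sigma> N [b] = concat (map (\<lambda>c. subst_pow \<sigma> n0 [c]) (subst_pow \<sigma> (N - n0) [b]))"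
      using subst_pow_add[of \<sigma> n0 "N - n0" "[b]"] subst_pow_eq_concat by simp
    moreover have "length (subst_pow \<sigma> n0 [c]) \<le> B" for c
      using B by simp
    ultimately obtain c where "sublist (subst_pow \<sigma> n0 [c]) w"
      using sublist_concat_map_long[of "\<lambda>c. subst_pow \<sigma> n0 [c]" B w] w by auto
    then show ?thesis using n0[of n0 c] sublist_order.order.trans by blast
  qed
  then show ?thesis using that[of "Suc (2 * B)"] by simp
qed

lemma length_window [simp]: "length (window x i n) = n"
  by (simp add: window_def)

lemma window_take_drop:
  "i + m \<le> n \<Longrightarrow> take m (drop i (window x j n)) = window x (j + int i) m"
  by (rule nth_equalityI) (auto simp: window_def algebra_simps)

lemma window_in_lang: "x \<in> Xsub \<sigma> \<Longrightarrow> window x i n \<in> lang \<sigma>"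
  unfolding lang_def by auto

lemma lang_sublist_closed:
  assumes "u \<in> lang \<sigma>" "sublist w u"
  shows "w \<in> lang \<sigma>"
proof -
  obtain x i where x: "x \<in> Xsub \<sigma>" "u = window x i (length u)"
    using assms(1) unfolding lang_def by blast
  obtain ps ss where u: "u = ps @ w @ ss"
    using assms(2) sublist_def by blast
  have "window x (i + int (length ps)) (length w) = take (length w) (drop (length ps) (window x i (length u)))"
    using u by (intro window_take_drop[symmetric]) simp
  also have "\<dots> = take (length w) (drop (length ps) u)"
    by (simp only: x(2)[symmetric])
  also have "\<dots> = w"
    using u by simp
  finally show ?thesis using window_in_lang[OF x(1)] by metis
qed

lemma lang_subset_gen_lang: "lang \<sigma> \<subseteq> gen_lang \<sigma>"
  unfolding lang_def Xsub_def by auto metis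

lemma subst_pow_in_gen_lang:
  assumes "u \<in> gen_lang \<sigma>"
  shows "subst_pow \<sigma> n u \<in> gen_lang \<sigma>"
proof -
  obtain a m where "sublist u (subst_pow \<sigma> m [a])"
    using assms unfolding gen_lang_def by blast
  then have "sublist (subst_pow \<sigma> n u) (subst_pow \<sigma> (n + m) [a])"
    unfolding subst_pow_add by (rule sublist_subst_pow)
  then show ?thesis unfolding gen_lang_def by blast
qed

lemma lang_eq_gen_lang:
  fixes \<sigma> :: "'a::finite \<Rightarrow> 'a list"
  assumes "non_erasing \<sigma>" "primitive \<sigma>" "x \<in> Xsub \<sigma>"
  shows "lang \<sigma> = gen_lang \<sigma>"
proof
  show "gen_lang \<sigma> \<subseteq> lang \<sigma>"
  proof
    fix u assume "u \<in> gen_lang \<sigma>"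
    then obtain L where L: "\<And>w b N. sublist w (subst_pow \<sigma> N [b]) \<Longrightarrow> L \<le> length w \<Longrightarrow> sublist u w"
      using long_factor_contains_gen_lang[OF assms(1,2)] by blast
    obtain b N where "sublist (window x 0 L) (subst_pow \<sigma> N [b])"
      using assms(3) unfolding Xsub_def gen_lang_def by blast
    then have "sublist u (window x 0 L)" using L by simp
    then show "u \<in> lang \<sigma>" using lang_sublist_closed window_in_lang[OF assms(3)] by blast
  qed
qed (rule lang_subset_gen_lang)

section \<open>Occurrences and discrepancy\<close>

definition occurs_at :: "'a list \<Rightarrow> 'a list \<Rightarrow> nat \<Rightarrow> bool" where
  "occurs_at v z k \<longleftrightarrow> k + length v \<le> length z \<and> take (length v) (drop k z) = v"

definition occ_in :: "'a list \<Rightarrow> 'a list \<Rightarrow> nat \<Rightarrow> nat \<Rightarrow> nat" where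
  "occ_in v z i j = card {k \<in> {i..<j}. occurs_at v z k}"

lemma occ_eq_occ_in: "occ w v = occ_in v w 0 (length w + 1 - length v)"
proof -
  have "{k. k + length v \<le> length w \<and> take (length v) (drop k w) = v}
      = {k \<in> {0..<length w + 1 - length v}. occurs_at v w k}"
    by (auto simp: occurs_at_def)
  then show ?thesis unfolding occ_def occ_in_def by simp
qed

lemma occ_in_split:
  assumes "i \<le> j" "j \<le> k"
  shows "occ_in v z i k = occ_in v z i j + occ_in v z j k"
proof -
  have split: "{l \<in> {i..<k}. occurs_at v z l} = {l \<in> {i..<j}. occurs_at v z l} \<union> {l \<in> {j..<k}. occurs_at v z l}"
    using assms by auto
  show ?thesis
    unfolding occ_in_def split by (rule card_Un_disjoint) auto
qed

lemma occurs_at_append_shift: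
  assumes "k + length v \<le> length z"
  shows "occurs_at v (P @ z @ S) (length P + k) \<longleftrightarrow> occurs_at v z k"
  using assms by (simp add: occurs_at_def)

lemma occ_in_append_shift:
  assumes "j + length v \<le> length z + 1"
  shows "occ_in v (P @ z @ S) (length P + i) (length P + j) = occ_in v z i j"
proof -
  have "{k \<in> {length P + i..<length P + j}. occurs_at v (P @ z @ S) k}
      = (+) (length P) ` {k \<in> {i..<j}. occurs_at v z k}"
  proof (intro set_eqI iffI)
    fix k assume k: "k \<in> {k \<in> {length P + i..<length P + j}. occurs_at v (P @ z @ S) k}"
    then have "k - length P + length v \<le> length z" "k = length P + (k - length P)"
      using assms by auto
    moreover have "occurs_at v z (k - length P)"
      using k occurs_at_append_shift[of "k - length P" v z P S] calculation by simp
    ultimately show "k \<in> (+) (length P) ` {k \<in> {i..<j}. occurs_at v z k}"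
      using k by (intro image_eqI[of k _ "k - length P"]) auto
  next
    fix k assume "k \<in> (+) (length P) ` {k \<in> {i..<j}. occurs_at v z k}"
    then obtain l where "k = length P + l" "l \<in> {i..<j}" "occurs_at v z l"
      by blast
    then show "k \<in> {k \<in> {length P + i..<length P + j}. occurs_at v (P @ z @ S) k}"
      using assms occurs_at_append_shift[of l v z P S] by auto
  qed
  then show ?thesis
    unfolding occ_in_def by (simp add: card_image)
qed

lemma occ_factor_eq_occ_in:
  assumes "i + n \<le> length z" "length v \<le> n + 1"
  shows "occ (take n (drop i z)) v = occ_in v z i (i + (n + 1 - length v))"
proof -
  let ?u = "take n (drop i z)"
  have u: "length ?u = n" using assms(1) by simp
  have "occ ?u v = occ_in v ?u 0 (n + 1 - length v)"
    using occ_eq_occ_in[of ?u v] u by simp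
  also have "\<dots> = occ_in v z i (i + (n + 1 - length v))"
  proof -
    have z: "take i z @ ?u @ drop n (drop i z) = z"
      by (simp only: append_take_drop_id)
    have "length (take i z) = i"
      using assms(1) by simp
    then show ?thesis
      using occ_in_append_shift[of "n + 1 - length v" v ?u "take i z" "drop n (drop i z)" 0] assms(2) u
      unfolding z by simp
  qed
  finally show ?thesis .
qed

(* Only occurrences lying inside z are counted; for i <= j with j + |v| <= |z| + 1 every start
   position in [i, j) is eligible. *)
definition discrepancy :: "nat \<Rightarrow> nat \<Rightarrow> 'a list \<Rightarrow> 'a list \<Rightarrow> nat \<Rightarrow> nat \<Rightarrow> int" where
  "discrepancy p q v z i j = int q * int (occ_in v z i j) - int p * (int j - int i)"

lemma discrepancy_split:
  "i \<le> j \<Longrightarrow> j \<le> k \<Longrightarrow> discrepancy p q v z i k = discrepancy p q v z i j + discrepancy p q v z j k"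
  using occ_in_split[of i j k v z] by (simp add: discrepancy_def algebra_simps)

lemma discrepancy_append_shift:
  "j + length v \<le> length z + 1 \<Longrightarrow>
    discrepancy p q v (P @ z @ S) (length P + i) (length P + j) = discrepancy p q v z i j"
  by (simp add: discrepancy_def occ_in_append_shift)

lemma dvd_distance_of_extremal_discrepancy:
  assumes "v \<noteq> []" "coprime p q"
    and extremal: "\<And>z i j. z \<in> L \<Longrightarrow> i \<le> j \<Longrightarrow> j + length v \<le> length z + 1 \<Longrightarrow>
      \<bar>discrepancy p q v z i j\<bar> \<le> \<bar>discrepancy p q v z0 i0 j0\<bar>"
    and "i0 \<le> j0" "j0 + length v \<le> length z0 + 1"
    and "P @ z0 @ M @ z0 @ S \<in> L"
  shows "q dvd length z0 + length M"
proof -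
  let ?z = "P @ z0 @ M @ z0 @ S" and ?d0 = "discrepancy p q v z0 i0 j0"
  let ?F = "discrepancy p q v ?z"
  define s1 where "s1 = length P"
  define s2 where "s2 = length (P @ z0 @ M)"
  have "j0 \<le> length z0" using assms(1,5) by (cases v) auto
  then have le: "s1 + i0 \<le> s1 + j0" "s1 + j0 \<le> s2 + i0" "s2 + i0 \<le> s2 + j0"
    using assms(4) by (auto simp: s1_def s2_def)
  have end_le: "s2 + j0 + length v \<le> length ?z + 1"
    using assms(5) by (simp add: s2_def)
  have first: "?F (s1 + i0) (s1 + j0) = ?d0"
    unfolding s1_def using assms(5) by (rule discrepancy_append_shift)
  have second: "?F (s2 + i0) (s2 + j0) = ?d0"
    using discrepancy_append_shift[OF assms(5), of p q "P @ z0 @ M" S i0] by (simp add: s2_def)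
  have "\<bar>?F (s1 + i0) (s2 + j0)\<bar> \<le> \<bar>?d0\<bar>" "\<bar>?F (s1 + j0) (s2 + i0)\<bar> \<le> \<bar>?d0\<bar>"
    using extremal[OF assms(6)] le end_le by auto
  moreover have "?F (s1 + i0) (s2 + j0) = ?d0 + ?F (s1 + j0) (s2 + i0) + ?d0"
    using le first second by (simp add: discrepancy_split[of "s1 + i0" "s2 + i0" "s2 + j0"]
        discrepancy_split[of "s1 + i0" "s1 + j0" "s2 + i0"])
  \<comment> \<open>neither the whole interval nor the gap can beat the extremal value\<close>
  ultimately have "?d0 + ?F (s1 + j0) (s2 + i0) = 0"
    by (auto simp: abs_le_iff)
  then have "?F (s1 + i0) (s2 + i0) = 0"
    using first discrepancy_split[OF le(1,2), of p q v ?z] by linarith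
  then have "int q * int (occ_in v ?z (s1 + i0) (s2 + i0)) = int p * int (length z0 + length M)"
    by (simp add: discrepancy_def s1_def s2_def)
  then have "q dvd p * (length z0 + length M)"
    by (metis dvd_triv_left of_nat_dvd_iff of_nat_mult)
  then show ?thesis
    using assms(2) by (simp add: coprime_commute coprime_dvd_mult_right_iff)
qed

section \<open>Frequencies under an invariant measure\<close>

lemma sets_window_eq:
  "{x. window x i n = w} \<in> sets (PiM (UNIV :: int set) (\<lambda>_. count_space (UNIV :: 'a set)))"
proof -
  have "{x. window x i n = w} = {x \<in> space (PiM (UNIV :: int set) (\<lambda>_. count_space (UNIV :: 'a set))).
      length w = n \<and> (\<forall>k\<in>{..<n}. x (i + int k) = w ! k)}"
    by (auto simp: window_def space_PiM list_eq_iff_nth_eq)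
  also have "\<dots> \<in> sets (PiM (UNIV :: int set) (\<lambda>_. count_space (UNIV :: 'a set)))"
    by measurable
  finally show ?thesis .
qed

lemma window_shift: "window (shift x) i n = window x (i + 1) n"
  by (simp add: window_def shift_def algebra_simps)

lemma occ_window:
  "occ (window x i n) v = card ({..<n + 1 - length v} \<inter> {k. window x (i + int k) (length v) = v})"
proof -
  have "{k \<in> {0..<n + 1 - length v}. occurs_at v (window x i n) k}
      = {..<n + 1 - length v} \<inter> {k. window x (i + int k) (length v) = v}"
    by (auto simp: occurs_at_def window_take_drop)
  then show ?thesis
    by (simp add: occ_eq_occ_in occ_in_def)
qed

lemma invariant_prob_AE_Xsub:
  assumes "invariant_prob \<sigma> \<mu>"
  shows "AE x in \<mu>. x \<in> Xsub \<sigma>"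
proof -
  interpret prob_space \<mu>
    using assms by (simp add: invariant_prob_def)
  show ?thesis
    using assms by (intro AE_prob_1) (simp add: invariant_prob_def measure_def)
qed

lemma invariant_prob_measure_window:
  assumes "invariant_prob \<sigma> \<mu>"
  shows "measure \<mu> {x. window x (int k) (length v) = v} = measure \<mu> (cyl \<sigma> v)"
proof -
  define A where "A k = {x. window x (int k) (length v) = v}" for k
  have sets: "A k \<in> sets \<mu>" for k
    using assms sets_window_eq by (simp add: invariant_prob_def A_def)
  have "shift -` A k = A (Suc k)" for k
    by (auto simp: A_def window_shift add.commute)
  then have "emeasure \<mu> (A (Suc k)) = emeasure \<mu> (A k)" for k
    using assms sets by (metis invariant_prob_def)
  then have "emeasure \<mu> (A k) = emeasure \<mu> (A 0)" for k
    by (induction k) simp_all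
  then have "measure \<mu> (A k) = measure \<mu> (A 0)"
    unfolding measure_def by metis
  also have "\<dots> = measure \<mu> (cyl \<sigma> v)"
  proof (rule measure_eq_AE)
    show "AE x in \<mu>. x \<in> A 0 \<longleftrightarrow> x \<in> cyl \<sigma> v"
      using invariant_prob_AE_Xsub[OF assms] by eventually_elim (simp add: A_def cyl_def)
    have "Xsub \<sigma> \<in> sets \<mu>"
      using assms emeasure_notin_sets by (fastforce simp: invariant_prob_def)
    then show "cyl \<sigma> v \<in> sets \<mu>"
      using sets[of 0] by (simp add: cyl_def A_def Collect_conj_eq Int_def[symmetric])
  qed (rule sets)
  finally show ?thesis
    unfolding A_def .
qed

lemma invariant_prob_expected_occ:
  assumes "invariant_prob \<sigma> \<mu>"
  shows "integrable \<mu> (\<lambda>x. real (occ (window x 0 n) v))"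
    and "(\<integral>x. real (occ (window x 0 n) v) \<partial>\<mu>) = real (n + 1 - length v) * measure \<mu> (cyl \<sigma> v)"
proof -
  interpret prob_space \<mu>
    using assms by (simp add: invariant_prob_def)
  define A where "A k = {x. window x (int k) (length v) = v}" for k
  have sets: "A k \<in> sets \<mu>" for k
    using assms sets_window_eq by (simp add: invariant_prob_def A_def)
  have occ_sum: "(\<lambda>x. real (occ (window x 0 n) v)) = (\<lambda>x. \<Sum>k<n + 1 - length v. indicator (A k) x)"
  proof
    fix x
    let ?B = "{k. window x (int k) (length v) = v}"
    have "real (occ (window x 0 n) v) = (\<Sum>k\<in>{..<n + 1 - length v} \<inter> ?B. 1)"
      by (simp only: occ_window real_of_card add_0)
    also have "\<dots> = (\<Sum>k<n + 1 - length v. if k \<in> ?B then 1 else 0)"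
      by (rule sum.inter_restrict) simp
    also have "\<dots> = (\<Sum>k<n + 1 - length v. indicator (A k) x)"
      by (rule sum.cong) (simp_all add: A_def indicator_def)
    finally show "real (occ (window x 0 n) v) = (\<Sum>k<n + 1 - length v. indicator (A k) x)" .
  qed
  have indicator_integrable: "integrable \<mu> (indicator (A k) :: _ \<Rightarrow> real)" for k
    using sets by (intro integrable_real_indicator) (simp_all add: less_top[symmetric])
  show "integrable \<mu> (\<lambda>x. real (occ (window x 0 n) v))"
    unfolding occ_sum by (rule Bochner_Integration.integrable_sum) (rule indicator_integrable)
  have "(\<integral>x. real (occ (window x 0 n) v) \<partial>\<mu>) = (\<Sum>k<n + 1 - length v. measure \<mu> (A k))"
    unfolding occ_sum using sets indicator_integrable by (simp add: integral_sum)
  also have "\<dots> = real (n + 1 - length v) * measure \<mu> (cyl \<sigma> v)"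
    using invariant_prob_measure_window[OF assms] by (simp add: A_def)
  finally show "(\<integral>x. real (occ (window x 0 n) v) \<partial>\<mu>) = real (n + 1 - length v) * measure \<mu> (cyl \<sigma> v)" .
qed

lemma balanced_occ_near_expectation:
  assumes "invariant_prob \<sigma> \<mu>" "balanced_on \<sigma> v"
  obtains C where "\<And>u. u \<in> lang \<sigma> \<Longrightarrow>
    \<bar>real (occ u v) - real (length u + 1 - length v) * measure \<mu> (cyl \<sigma> v)\<bar> \<le> C"
proof -
  interpret prob_space \<mu>
    using assms(1) by (simp add: invariant_prob_def)
  obtain C :: int where C: "\<And>w w'. w \<in> lang \<sigma> \<Longrightarrow> w' \<in> lang \<sigma> \<Longrightarrow> length w = length w' \<Longrightarrow>
      \<bar>int (occ w v) - int (occ w' v)\<bar> \<le> C"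
    using assms(2) unfolding balanced_on_def by blast
  have "\<bar>real (occ u v) - real (length u + 1 - length v) * measure \<mu> (cyl \<sigma> v)\<bar> \<le> C"
    if u: "u \<in> lang \<sigma>" for u
  proof -
    let ?f = "\<lambda>x. real (occ (window x 0 (length u)) v)"
    have "AE x in \<mu>. \<bar>?f x - real (occ u v)\<bar> \<le> C"
      using invariant_prob_AE_Xsub[OF assms(1)]
    proof eventually_elim
      case (elim x)
      have "\<bar>int (occ (window x 0 (length u)) v) - int (occ u v)\<bar> \<le> C"
        using C[OF window_in_lang[OF elim] u] by simp
      then have "real_of_int \<bar>int (occ (window x 0 (length u)) v) - int (occ u v)\<bar> \<le> real_of_int C"
        by (simp only: of_int_le_iff)
      then show ?case
        by simp
    qed
    then have "AE x in \<mu>. ?f x \<le> real (occ u v) + C" "AE x in \<mu>. real (occ u v) - C \<le> ?f x"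
      by (auto elim!: eventually_mono)
    then have "integral\<^sup>L \<mu> ?f \<le> real (occ u v) + C" "real (occ u v) - C \<le> integral\<^sup>L \<mu> ?f"
      using integral_mono_AE[of \<mu> ?f "\<lambda>_. real (occ u v) + C"]
        integral_mono_AE[of \<mu> "\<lambda>_. real (occ u v) - C" ?f]
        invariant_prob_expected_occ(1)[OF assms(1)] by (auto simp: prob_space)
    then show ?thesis
      using invariant_prob_expected_occ(2)[OF assms(1)] by (simp add: abs_le_iff)
  qed
  then show ?thesis
    using that by blast
qed

lemma discrepancy_bounded:
  assumes "invariant_prob \<sigma> \<mu>" "balanced_on \<sigma> v" "v \<noteq> []"
    and "measure \<mu> (cyl \<sigma> v) = real p / real q" "q > 0"
  obtains K :: nat where "\<And>z i j. z \<in> lang \<sigma> \<Longrightarrow> i \<le> j \<Longrightarrow> j + length v \<le> length z + 1 \<Longrightarrow>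
    \<bar>discrepancy p q v z i j\<bar> \<le> int K"
proof -
  obtain C where C: "\<And>u. u \<in> lang \<sigma> \<Longrightarrow>
      \<bar>real (occ u v) - real (length u + 1 - length v) * (real p / real q)\<bar> \<le> C"
    using balanced_occ_near_expectation[OF assms(1,2)] assms(4) by metis
  have "\<bar>discrepancy p q v z i j\<bar> \<le> nat \<lceil>q * C\<rceil>"
    if z: "z \<in> lang \<sigma>" "i \<le> j" "j + length v \<le> length z + 1" for z i j
  proof -
    define n where "n = j - i + length v - 1"
    define u where "u = take n (drop i z)"
    have "length v > 0"
      using assms(3) by simp
    then have "i + n \<le> length z" "length v \<le> n + 1" "i + (n + 1 - length v) = j"
      and len: "length u + 1 - length v = j - i"
      using z by (auto simp: n_def u_def simp del: length_greater_0_conv)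
    then have occ: "occ u v = occ_in v z i j"
      using occ_factor_eq_occ_in[of i n z v] by (simp add: u_def)
    have "u \<in> lang \<sigma>"
      unfolding u_def using z(1) lang_sublist_closed
      by (metis sublist_drop sublist_order.order.trans sublist_take)
    then have "\<bar>real (occ_in v z i j) - real (j - i) * (real p / real q)\<bar> \<le> C"
      using C occ len by metis
    then have "\<bar>real q * (real (occ_in v z i j) - real (j - i) * (real p / real q))\<bar> \<le> real q * C"
      by (simp add: abs_mult mult_left_mono)
    moreover have "real q * (real (occ_in v z i j) - real (j - i) * (real p / real q))
        = real_of_int (discrepancy p q v z i j)"
      using assms(5) z(2) by (simp add: discrepancy_def of_nat_diff field_simps)
    ultimately have "real_of_int \<bar>discrepancy p q v z i j\<bar> \<le> real q * C"
      by simp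
    then show ?thesis
      by linarith
  qed
  then show ?thesis
    using that by blast
qed

lemma ex_word_with_return_distances_dvd:
  assumes "invariant_prob \<sigma> \<mu>" "balanced_on \<sigma> v" "v \<in> lang \<sigma>" "v \<noteq> []"
    and "measure \<mu> (cyl \<sigma> v) = real p / real q" "q > 0" "coprime p q"
  obtains z0 where "z0 \<in> lang \<sigma>"
    and "\<And>P M S. P @ z0 @ M @ z0 @ S \<in> lang \<sigma> \<Longrightarrow> q dvd length z0 + length M"
proof -
  obtain K where K: "\<And>z i j. z \<in> lang \<sigma> \<Longrightarrow> i \<le> j \<Longrightarrow> j + length v \<le> length z + 1 \<Longrightarrow>
      \<bar>discrepancy p q v z i j\<bar> \<le> int K"
    using discrepancy_bounded[OF assms(1,2,4,5,6)] by blast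
  define admissible where "admissible = (\<lambda>(z, i, j). z \<in> lang \<sigma> \<and> i \<le> j \<and> j + length v \<le> length z + 1)"
  define magnitude where "magnitude = (\<lambda>(z, i, j). nat \<bar>discrepancy p q v z i j\<bar>)"
  have "admissible (v, 0, 0)"
    using assms(3) by (simp add: admissible_def)
  moreover have "\<forall>y. admissible y \<longrightarrow> magnitude y < Suc K"
    using K by (auto simp: admissible_def magnitude_def less_Suc_eq_le nat_le_iff)
  ultimately obtain z0 i0 j0 where z0: "admissible (z0, i0, j0)"
    and max: "\<And>y. admissible y \<Longrightarrow> magnitude y \<le> magnitude (z0, i0, j0)"
    using ex_has_greatest_nat[of admissible "(v, 0, 0)" magnitude "Suc K"] by auto
  have extremal: "\<bar>discrepancy p q v z i j\<bar> \<le> \<bar>discrepancy p q v z0 i0 j0\<bar>"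
    if "z \<in> lang \<sigma>" "i \<le> j" "j + length v \<le> length z + 1" for z i j
    using max[of "(z, i, j)"] that by (simp add: admissible_def magnitude_def)
  show ?thesis
  proof (rule that)
    show "z0 \<in> lang \<sigma>"
      using z0 by (simp add: admissible_def)
    show "q dvd length z0 + length M" if "P @ z0 @ M @ z0 @ S \<in> lang \<sigma>" for P M S
      using dvd_distance_of_extremal_discrepancy[OF assms(4,7) extremal _ _ that] z0
      by (simp add: admissible_def)
  qed
qed

section \<open>Lengths of iterated images\<close>

definition lengths_dvd_up_to_offsets :: "('a \<Rightarrow> 'a list) \<Rightarrow> nat \<Rightarrow> nat \<Rightarrow> bool" where
  "lengths_dvd_up_to_offsets \<sigma> q n \<longleftrightarrow> (\<exists>pos :: 'a \<Rightarrow> int. \<forall>b x c. b # x @ [c] \<in> lang \<sigma> \<longrightarrow>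
     int q dvd int (length (subst_pow \<sigma> n (b # x))) + pos c - pos b)"

lemma lengths_dvd_up_to_offsetsI:
  assumes dist: "\<And>P M S. P @ z0 @ M @ z0 @ S \<in> lang \<sigma> \<Longrightarrow> q dvd length z0 + length M"
    and occ: "\<And>c. sublist z0 (subst_pow \<sigma> n [c])"
    and closed: "\<And>u. u \<in> lang \<sigma> \<Longrightarrow> subst_pow \<sigma> n u \<in> lang \<sigma>"
  shows "lengths_dvd_up_to_offsets \<sigma> q n"
proof -
  obtain P R where PR: "\<And>c. subst_pow \<sigma> n [c] = P c @ z0 @ R c"
    using occ unfolding sublist_def by metis
  have "int q dvd int (length (subst_pow \<sigma> n (b # x))) + int (length (P c)) - int (length (P b))"
    if "b # x @ [c] \<in> lang \<sigma>" for b x c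
  proof -
    have "subst_pow \<sigma> n (b # x @ [c]) = P b @ z0 @ (R b @ subst_pow \<sigma> n x @ P c) @ z0 @ R c"
      using PR[of b] PR[of c] subst_pow_Cons[of \<sigma> n b "x @ [c]"] by simp
    then have "int q dvd int (length z0 + length (R b @ subst_pow \<sigma> n x @ P c))"
      using dist closed[OF that] by (metis of_nat_dvd_iff)
    moreover have "int (length (subst_pow \<sigma> n (b # x))) + int (length (P c)) - int (length (P b))
        = int (length z0 + length (R b @ subst_pow \<sigma> n x @ P c))"
      using PR[of b] subst_pow_Cons[of \<sigma> n b x] by simp
    ultimately show ?thesis
      by (simp only:)
  qed
  then show ?thesis
    unfolding lengths_dvd_up_to_offsets_def by (intro exI[of _ "\<lambda>c. int (length (P c))"]) blast
qed

lemma dvd_length_subst_pow_return_word: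
  assumes "lengths_dvd_up_to_offsets \<sigma> q n" "return_word \<sigma> a w"
  shows "q dvd length (subst_pow \<sigma> n w)"
proof (cases w)
  case Nil
  then show ?thesis by simp
next
  case (Cons a' w')
  then have "w = a # w'" "a # w' @ [a] \<in> lang \<sigma>"
    using assms(2) by (auto simp: return_word_def)
  then show ?thesis
    using assms(1) unfolding lengths_dvd_up_to_offsets_def by (metis add_diff_cancel_right' of_nat_dvd_iff)
qed

lemma dvd_length_subst_pow_removable_letter:
  assumes "lengths_dvd_up_to_offsets \<sigma> q n" "[b, a, c] \<in> lang \<sigma>" "[b, c] \<in> lang \<sigma>"
  shows "q dvd length (subst_pow \<sigma> n [a])"
proof -
  obtain pos :: "'a \<Rightarrow> int" where pos: "\<And>b x c. b # x @ [c] \<in> lang \<sigma> \<Longrightarrow>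
      int q dvd int (length (subst_pow \<sigma> n (b # x))) + pos c - pos b"
    using assms(1) unfolding lengths_dvd_up_to_offsets_def by blast
  have "int q dvd int (length (subst_pow \<sigma> n [b, a])) + pos c - pos b"
    using pos[of b "[a]" c] assms(2) by simp
  moreover have "int q dvd int (length (subst_pow \<sigma> n [b])) + pos c - pos b"
    using pos[of b "[]" c] assms(3) by simp
  ultimately have "int q dvd (int (length (subst_pow \<sigma> n [b, a])) + pos c - pos b)
      - (int (length (subst_pow \<sigma> n [b])) + pos c - pos b)"
    by (rule dvd_diff)
  then show ?thesis
    using subst_pow_Cons[of \<sigma> n b "[a]"] by (simp flip: of_nat_dvd_iff)
qed

lemma eventually_lengths_dvd_up_to_offsets:
  fixes \<sigma> :: "'a::finite \<Rightarrow> 'a list"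
  assumes "non_erasing \<sigma>" "primitive \<sigma>" "invariant_prob \<sigma> \<mu>" "balanced_on \<sigma> v" "v \<in> lang \<sigma>"
    and "measure \<mu> (cyl \<sigma> v) = real p / real q" "q > 0" "coprime p q"
  obtains N where "\<And>n. N \<le> n \<Longrightarrow> lengths_dvd_up_to_offsets \<sigma> q n"
proof (cases "v = []")
  case True
  have "cyl \<sigma> v = Xsub \<sigma>"
    using True by (auto simp: cyl_def window_def)
  then have "real p / real q = 1"
    using assms(3,6) by (simp add: invariant_prob_def measure_def)
  then have "q = 1"
    using assms(7,8) by simp
  then have "lengths_dvd_up_to_offsets \<sigma> q n" for n
    unfolding lengths_dvd_up_to_offsets_def by simp
  then show ?thesis
    using that by blast
next
  case False
  obtain x0 where "x0 \<in> Xsub \<sigma>"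
    using assms(3) by (fastforce simp: invariant_prob_def)
  then have lang_eq: "lang \<sigma> = gen_lang \<sigma>"
    using lang_eq_gen_lang assms(1,2) by blast
  obtain z0 where "z0 \<in> lang \<sigma>"
    and dist: "\<And>P M S. P @ z0 @ M @ z0 @ S \<in> lang \<sigma> \<Longrightarrow> q dvd length z0 + length M"
    using ex_word_with_return_distances_dvd[OF assms(3,4,5) False assms(6,7,8)] by blast
  then obtain N where occ: "\<And>n c. N \<le> n \<Longrightarrow> sublist z0 (subst_pow \<sigma> n [c])"
    using sublist_gen_lang_eventually[OF assms(1,2)] lang_eq by blast
  have closed: "\<And>u n. u \<in> lang \<sigma> \<Longrightarrow> subst_pow \<sigma> n u \<in> lang \<sigma>"
    using lang_eq subst_pow_in_gen_lang by blast
  have "lengths_dvd_up_to_offsets \<sigma> q n" if "N \<le> n" for n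
    using lengths_dvd_up_to_offsetsI[of z0 \<sigma> q n] dist occ that closed by blast
  then show ?thesis
    using that by blast
qed

theorem theorem1p2:
  fixes \<sigma> :: "'a::finite \<Rightarrow> 'a list" and \<mu> :: "(int \<Rightarrow> 'a) measure"
    and v :: "'a list" and p q :: nat
  assumes "non_erasing \<sigma>" and "primitive \<sigma>"
    and "invariant_prob \<sigma> \<mu>"
    and "v \<in> lang \<sigma>"
    and "measure \<mu> (cyl \<sigma> v) = real p / real q" and "q > 0" and "coprime p q"
    and "balanced_on \<sigma> v"
  shows "(\<forall>a w. return_word \<sigma> a w \<longrightarrow>
            (\<exists>N. \<forall>n\<ge>N. q dvd length (subst_pow \<sigma> n w)))
       \<and> (\<forall>a. [a, a] \<in> lang \<sigma> \<longrightarrow> (\<exists>N. \<forall>n\<ge>N. q dvd length (subst_pow \<sigma> n [a])))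
       \<and> (\<forall>a b c. [b, a, c] \<in> lang \<sigma> \<and> [b, c] \<in> lang \<sigma> \<longrightarrow>
            (\<exists>N. \<forall>n\<ge>N. q dvd length (subst_pow \<sigma> n [a])))"
proof -
  obtain N where N: "\<And>n. N \<le> n \<Longrightarrow> lengths_dvd_up_to_offsets \<sigma> q n"
    using eventually_lengths_dvd_up_to_offsets[OF assms(1-3,8,4-7)] by blast
  have "return_word \<sigma> a [a]" if "[a, a] \<in> lang \<sigma>" for a
    using that by (simp add: return_word_def)
  then show ?thesis
    using N dvd_length_subst_pow_return_word dvd_length_subst_pow_removable_letter by metis
qed

end
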